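(* Let $g_1,\dots,g_N\in\mathbb{C}^K$ be nonzero, $w_1,\dots,w_N\ge0$, and let $\mathrm{WFP}$ and $\mathrm{WFC}$ be as defined in the context. Let $\mathcal{N}$ be partitioned into disjoint sets $\mathcal{S}_1,\dots,\mathcal{S}_L$ and fix integers $0\le r_i\le|\mathcal{S}_i|$, not all zero. Let $\mathcal{R}^\ast$ be the output of the JGS algorithm run with cost $\mathcal{C}=\mathrm{WFC}$ and cardinality requirements $|\mathcal{R}\cap\mathcal{S}_i|=r_i$, and set $\mathcal{T}^\ast=\mathcal{N}\setminus\mathcal{R}^\ast$. Let $\mathcal{T}_{OPT}$ minimize $\mathrm{WFP}(\mathcal{T})$ over all $\mathcal{T}\subseteq\mathcal{N}$ with $|\mathcal{T}\cap\mathcal{S}_i|=|\mathcal{S}_i|-r_i$ for all $i$, and suppose $\mathrm{WFP}(\mathcal{T}_{OPT})>0$. Then $$\mathrm{WFP}(\mathcal{T}^\ast)\le\frac12\Big(1+\frac{\mathrm{WFP}(\mathcal{N})}{\mathrm{WFP}(\mathcal{T}_{OPT})}\Big)\mathrm{WFP}(\mathcal{T}_{OPT}).$$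
   Context: $\mathrm{WFP}(\mathcal{S})=\sum_{i,j\in\mathcal{S}}w_iw_j\frac{|\langle g_i,g_j\rangle|^2}{\|g_i\|_2^2\|g_j\|_2^2}$ (weighted frame potential) and $\mathrm{WFC}(\mathcal{T})=\mathrm{WFP}(\mathcal{N})-\mathrm{WFP}(\mathcal{N}\setminus\mathcal{T})$ (weighted frame cost). The JGS algorithm for cost $\mathcal{C}$ and requirements $r_i$: start with $\mathcal{R}=\varnothing$; for $\sum_i r_i$ iterations, form $\mathcal{R}^c=\bigcup_{i:\,|\mathcal{R}\cap\mathcal{S}_i|<r_i}(\mathcal{S}_i\setminus\mathcal{R})$, choose $t^\ast\in\arg\max_{t\in\mathcal{R}^c}\mathcal{C}(\mathcal{R}\cup\{t\})$, and set $\mathcal{R}\leftarrow\mathcal{R}\cup\{t^\ast\}$; output the final $\mathcal{R}$. (In the paper's use, $\mathcal{T}^\ast$ is the set of sensors actually kept.) *)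

theory Defs
  imports "HOL-Analysis.Analysis"
begin

definition cinner :: "complex^'k \<Rightarrow> complex^'k \<Rightarrow> complex" where
  "cinner x y = (\<Sum>k\<in>UNIV. x $ k * cnj (y $ k))"

definition WFP :: "(nat \<Rightarrow> complex^'k) \<Rightarrow> (nat \<Rightarrow> real) \<Rightarrow> nat set \<Rightarrow> real" where
  "WFP g w S = (\<Sum>i\<in>S. \<Sum>j\<in>S. w i * w j * (cmod (cinner (g i) (g j)))\<^sup>2
                     / ((norm (g i))\<^sup>2 * (norm (g j))\<^sup>2))"

definition WFC :: "(nat \<Rightarrow> complex^'k) \<Rightarrow> (nat \<Rightarrow> real) \<Rightarrow> nat set \<Rightarrow> nat set \<Rightarrow> real" where
  "WFC g w N T = WFP g w N - WFP g w (N - T)"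

definition jgs_cand :: "(nat \<Rightarrow> nat set) \<Rightarrow> nat \<Rightarrow> (nat \<Rightarrow> nat) \<Rightarrow> nat set \<Rightarrow> nat set" where
  "jgs_cand S L r R = (\<Union>i\<in>{i\<in>{1..L}. card (R \<inter> S i) < r i}. S i - R)"

text \<open>A run of the JGS algorithm: the list of elements chosen in order
  (ties in the argmax may be broken arbitrarily).\<close>
definition jgs_run :: "(nat set \<Rightarrow> real) \<Rightarrow> (nat \<Rightarrow> nat set) \<Rightarrow> nat \<Rightarrow> (nat \<Rightarrow> nat) \<Rightarrow> nat list \<Rightarrow> bool" where
  "jgs_run C S L r xs \<longleftrightarrow>
     length xs = (\<Sum>i\<in>{1..L}. r i) \<and>
     (\<forall>k < length xs.
        xs ! k \<in> jgs_cand S L r (set (take k xs)) \<and>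
        (\<forall>t \<in> jgs_cand S L r (set (take k xs)).
            C (insert t (set (take k xs))) \<le> C (insert (xs ! k) (set (take k xs)))))"

end

theory Submission
  imports Defs
begin

text \<open>Removing sensors from a frame can only lower the frame potential, and the loss
  caused by removing a sensor is larger when more sensors are present, so the frame cost
  WFC is monotone and submodular. The JGS algorithm is the greedy algorithm for the
  partition matroid given by the block requirements, hence achieves at least half of the
  cost of every feasible removal set, in particular of the complement of the optimum:
  WFP(N) - WFP(Topt) \<le> 2 (WFP(N) - WFP(T*)), which rearranges to the claimed bound.\<close>

definition submodular :: "('a set \<Rightarrow> real) \<Rightarrow> bool" where
  "submodular G \<longleftrightarrow> (\<forall>A B t. A \<subseteq> B \<longrightarrow> G (insert t B) - G B \<le> G (insert t A) - G A)"

definition wfp_term :: "(nat \<Rightarrow> complex^'k) \<Rightarrow> (nat \<Rightarrow> real) \<Rightarrow> nat \<Rightarrow> nat \<Rightarrow> real" where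
  "wfp_term g w i j = w i * w j * (cmod (cinner (g i) (g j)))\<^sup>2 / ((norm (g i))\<^sup>2 * (norm (g j))\<^sup>2)"

lemma WFP_eq_sum_pairs: "WFP g w X = (\<Sum>(i, j)\<in>X \<times> X. wfp_term g w i j)"
  unfolding WFP_def wfp_term_def by (simp add: sum.cartesian_product)

lemma wfp_term_nonneg: "0 \<le> w i \<Longrightarrow> 0 \<le> w j \<Longrightarrow> 0 \<le> wfp_term g w i j"
  unfolding wfp_term_def by (intro divide_nonneg_nonneg mult_nonneg_nonneg) auto

lemma WFP_mono:
  assumes "X \<subseteq> Y" "finite Y" "\<And>i. i \<in> Y \<Longrightarrow> 0 \<le> w i"
  shows "WFP g w X \<le> WFP g w Y"
  unfolding WFP_eq_sum_pairs
  by (rule sum_mono2) (use assms in \<open>auto intro!: wfp_term_nonneg\<close>)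

lemma WFP_diff_remove_mono:
  assumes "Y \<subseteq> X" "finite X" "\<And>i. i \<in> X \<Longrightarrow> 0 \<le> w i"
  shows "WFP g w Y - WFP g w (Y - {t}) \<le> WFP g w X - WFP g w (X - {t})"
proof -
  have diff: "WFP g w Z - WFP g w (Z - {t})
      = (\<Sum>(i, j)\<in>Z \<times> Z - (Z - {t}) \<times> (Z - {t}). wfp_term g w i j)" if "finite Z" for Z
    unfolding WFP_eq_sum_pairs using that by (subst sum_diff) auto
  show ?thesis
    unfolding diff[OF assms(2)] diff[OF finite_subset[OF assms(1,2)]]
    by (rule sum_mono2) (use assms in \<open>auto intro!: wfp_term_nonneg\<close>)
qed

lemma WFC_empty: "WFC g w N {} = 0"
  unfolding WFC_def by simp

lemma mono_WFC:
  assumes "finite N" "\<And>i. i \<in> N \<Longrightarrow> 0 \<le> w i"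
  shows "mono (WFC g w N)"
proof
  fix A B :: "nat set" assume "A \<subseteq> B"
  then have "WFP g w (N - B) \<le> WFP g w (N - A)"
    using assms by (intro WFP_mono) auto
  then show "WFC g w N A \<le> WFC g w N B"
    unfolding WFC_def by simp
qed

lemma submodular_WFC:
  assumes "finite N" "\<And>i. i \<in> N \<Longrightarrow> 0 \<le> w i"
  shows "submodular (WFC g w N)"
  unfolding submodular_def
proof (intro allI impI)
  fix A B :: "nat set" and t assume "A \<subseteq> B"
  then have "WFP g w (N - B) - WFP g w (N - B - {t}) \<le> WFP g w (N - A) - WFP g w (N - A - {t})"
    using assms by (intro WFP_diff_remove_mono) auto
  moreover have "N - insert t X = N - X - {t}" for X by auto
  ultimately show "WFC g w N (insert t B) - WFC g w N B \<le> WFC g w N (insert t A) - WFC g w N A"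
    unfolding WFC_def by simp
qed

lemma submodular_le_sum_marginals:
  assumes "submodular G" "finite Y"
  shows "G (X \<union> Y) \<le> G X + (\<Sum>y\<in>Y. G (insert y X) - G X)"
  using \<open>finite Y\<close>
proof (induction Y rule: finite_induct)
  case (insert y Y)
  have "G (X \<union> insert y Y) - G (X \<union> Y) \<le> G (insert y X) - G X"
    using \<open>submodular G\<close> unfolding submodular_def by (metis Un_insert_right sup_ge1)
  then show ?case using insert by simp
qed simp

lemma sum_by_blocks:
  assumes "finite A" "finite I" "disjoint_family_on S I" "p ` A \<subseteq> (\<Union>i\<in>I. S i)"
  shows "sum f A = (\<Sum>i\<in>I. sum f {a\<in>A. p a \<in> S i})"
proof -
  have "A = (\<Union>i\<in>I. {a\<in>A. p a \<in> S i})" using assms(4) by blast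
  then have "sum f A = sum f (\<Union>i\<in>I. {a\<in>A. p a \<in> S i})" by simp
  also have "\<dots> = (\<Sum>i\<in>I. sum f {a\<in>A. p a \<in> S i})"
    by (rule sum.UNION_disjoint) (use assms in \<open>auto simp: disjoint_family_on_def\<close>)
  finally show ?thesis .
qed

lemma sum_le_sum_if_card_le_dominated:
  fixes f h :: "'a \<Rightarrow> real"
  assumes "finite B" "card A \<le> card B"
    and "\<And>a b. a \<in> A \<Longrightarrow> b \<in> B \<Longrightarrow> f a \<le> h b" "\<And>b. b \<in> B \<Longrightarrow> 0 \<le> h b"
  shows "sum f A \<le> sum h B"
proof (cases "card A = 0")
  case True
  then have "sum f A = 0" by (metis card_0_eq sum.empty sum.infinite)
  then show ?thesis using assms(4) by (simp add: sum_nonneg)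
next
  case False
  then have "B \<noteq> {}" using assms(2) by auto
  define M where "M = Min (h ` B)"
  have "sum f A \<le> of_nat (card A) * M"
    by (rule sum_bounded_above) (use assms(1,3) \<open>B \<noteq> {}\<close> in \<open>auto simp: M_def\<close>)
  also have "\<dots> \<le> of_nat (card B) * M"
    using assms \<open>B \<noteq> {}\<close> by (intro mult_right_mono) (auto simp: M_def)
  also have "\<dots> \<le> sum h B"
    by (rule sum_bounded_below) (use assms(1) in \<open>auto simp: M_def\<close>)
  finally show ?thesis .
qed

lemma sum_marginals_take:
  fixes G :: "'a set \<Rightarrow> 'b::ab_group_add"
  shows "G (set xs) - G {} = (\<Sum>k<length xs. G (insert (xs ! k) (set (take k xs))) - G (set (take k xs)))"
proof -
  have "G (set xs) - G {} = (\<Sum>k<length xs. G (set (take (Suc k) xs)) - G (set (take k xs)))"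
    using sum_lessThan_telescope[of "\<lambda>k. G (set (take k xs))" "length xs"] by simp
  also have "\<dots> = (\<Sum>k<length xs. G (insert (xs ! k) (set (take k xs))) - G (set (take k xs)))"
    by (intro sum.cong) (auto simp: take_Suc_conv_app_nth)
  finally show ?thesis .
qed

lemma distinct_if_nth_notin_take:
  assumes "\<And>k. k < length xs \<Longrightarrow> xs ! k \<notin> set (take k xs)"
  shows "distinct xs"
  unfolding distinct_conv_nth
proof (intro allI impI)
  have "xs ! i \<noteq> xs ! j" if "i < j" "j < length xs" for i j
  proof -
    have "xs ! i \<in> set (take j xs)"
      using that by (auto simp: in_set_conv_nth intro!: exI[of _ i])
    then show ?thesis using assms that(2) by auto
  qed
  then show "xs ! i \<noteq> xs ! j" if "i < length xs" "j < length xs" "i \<noteq> j" for i j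
    using that by (metis linorder_neqE)
qed

lemma distinct_card_indices:
  assumes "distinct xs"
  shows "card {k\<in>{..<length xs}. xs ! k \<in> A} = card (set xs \<inter> A)"
proof -
  have "inj_on (nth xs) {k\<in>{..<length xs}. xs ! k \<in> A}"
    using assms by (auto simp: inj_on_def nth_eq_iff_index_eq)
  moreover have "nth xs ` {k\<in>{..<length xs}. xs ! k \<in> A} = set xs \<inter> A"
    by (auto simp: in_set_conv_nth)
  ultimately show ?thesis by (metis card_image)
qed

lemma jgs_run_step:
  assumes "jgs_run C S L r xs" "k < length xs"
  obtains b where "b \<in> {1..L}" "card (set (take k xs) \<inter> S b) < r b"
    "xs ! k \<in> S b" "xs ! k \<notin> set (take k xs)"
  using assms unfolding jgs_run_def jgs_cand_def by blast

lemma jgs_run_greedy_choice: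
  assumes "jgs_run C S L r xs" "k < length xs" "t \<in> jgs_cand S L r (set (take k xs))"
  shows "C (insert t (set (take k xs))) \<le> C (insert (xs ! k) (set (take k xs)))"
  using assms unfolding jgs_run_def by blast

lemma jgs_run_distinct:
  assumes "jgs_run C S L r xs"
  shows "distinct xs"
proof (rule distinct_if_nth_notin_take)
  fix k assume "k < length xs"
  then show "xs ! k \<notin> set (take k xs)" by (rule jgs_run_step[OF assms])
qed

lemma jgs_run_subset_blocks:
  assumes "jgs_run C S L r xs"
  shows "set xs \<subseteq> (\<Union>i\<in>{1..L}. S i)"
proof
  fix x assume "x \<in> set xs"
  then obtain k where "k < length xs" "x = xs ! k" by (auto simp: in_set_conv_nth)
  then show "x \<in> (\<Union>i\<in>{1..L}. S i)" by (metis UN_I jgs_run_step[OF assms])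
qed

lemma jgs_run_block_card_le:
  assumes run: "jgs_run C S L r xs" and disj: "disjoint_family_on S {1..L}"
    and "k \<le> length xs" "i \<in> {1..L}"
  shows "card (set (take k xs) \<inter> S i) \<le> r i"
  using assms(3,4)
proof (induction k arbitrary: i)
  case (Suc k)
  then have k: "k < length xs" by simp
  obtain b where b: "b \<in> {1..L}" "card (set (take k xs) \<inter> S b) < r b"
      "xs ! k \<in> S b" "xs ! k \<notin> set (take k xs)"
    using jgs_run_step[OF run k] .
  have take: "set (take (Suc k) xs) = insert (xs ! k) (set (take k xs))"
    using k by (simp add: take_Suc_conv_app_nth)
  show ?case
  proof (cases "i = b")
    case True
    then show ?thesis using b by (simp add: take card_insert_if)
  next
    case False
    then have "xs ! k \<notin> S i"
      using disj b Suc.prems(2) unfolding disjoint_family_on_def by blast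
    then show ?thesis using Suc k by (simp add: take)
  qed
qed simp

lemma jgs_run_block_card:
  assumes run: "jgs_run C S L r xs" and disj: "disjoint_family_on S {1..L}" and i: "i \<in> {1..L}"
  shows "card (set xs \<inter> S i) = r i"
proof -
  have le: "card (set xs \<inter> S j) \<le> r j" if "j \<in> {1..L}" for j
    using jgs_run_block_card_le[OF run disj _ that, of "length xs"] by simp
  have "(\<Sum>j\<in>{1..L}. card (set xs \<inter> S j)) = card (set xs)"
    using sum_by_blocks[OF _ _ disj, of "set xs" "\<lambda>x. x" "\<lambda>_. 1::nat"] jgs_run_subset_blocks[OF run]
    by (simp add: Int_def conj_commute)
  also have "\<dots> = (\<Sum>j\<in>{1..L}. r j)"
    using run jgs_run_distinct[OF run] by (simp add: jgs_run_def distinct_card)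
  finally have "(\<Sum>j\<in>{1..L}. card (set xs \<inter> S j)) = (\<Sum>j\<in>{1..L}. r j)" .
  with le show ?thesis
    using i by (metis (no_types, lifting) finite_atLeastAtMost sum_mono_inv)
qed

theorem jgs_run_half_approximation:
  fixes G :: "nat set \<Rightarrow> real"
  assumes "mono G" "submodular G" "G {} = 0"
    and run: "jgs_run G S L r xs" and disj: "disjoint_family_on S {1..L}"
    and fin: "\<And>i. i \<in> {1..L} \<Longrightarrow> finite (S i)"
    and Ropt_sub: "Ropt \<subseteq> (\<Union>i\<in>{1..L}. S i)"
    and Ropt_card: "\<And>i. i \<in> {1..L} \<Longrightarrow> card (Ropt \<inter> S i) = r i"
  shows "G Ropt \<le> 2 * G (set xs)"
proof -
  define R where "R k = set (take k xs)" for k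
  define D where "D k = G (insert (xs ! k) (R k)) - G (R k)" for k
  define E where "E y = G (insert y (set xs)) - G (set xs)" for y
  define K where "K i = {k\<in>{..<length xs}. xs ! k \<in> S i}" for i
  define Ob where "Ob i = {y\<in>Ropt - set xs. y \<in> S i}" for i
  have D_nonneg: "0 \<le> D k" for k
    using \<open>mono G\<close> by (simp add: D_def monoD subset_insertI)
  \<comment> \<open>Block i was still unsaturated when \<open>xs ! k \<in> S i\<close> was chosen, so every element of
    Ob i was a candidate at step k.\<close>
  have E_le_D: "E y \<le> D k" if i: "i \<in> {1..L}" and "y \<in> Ob i" "k \<in> K i" for i y k
  proof -
    have k: "k < length xs" "xs ! k \<in> S i" using \<open>k \<in> K i\<close> by (auto simp: K_def)
    obtain b where b: "b \<in> {1..L}" "card (R k \<inter> S b) < r b" "xs ! k \<in> S b"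
      using jgs_run_step[OF run k(1)] unfolding R_def by blast
    have "b = i" using disj b(1,3) i k(2) unfolding disjoint_family_on_def by blast
    have R_sub: "R k \<subseteq> set xs" unfolding R_def by (rule set_take_subset)
    then have "y \<in> jgs_cand S L r (R k)"
      using \<open>y \<in> Ob i\<close> b \<open>b = i\<close> by (auto simp: jgs_cand_def Ob_def)
    then have "G (insert y (R k)) \<le> G (insert (xs ! k) (R k))"
      using jgs_run_greedy_choice[OF run k(1)] unfolding R_def by blast
    moreover have "E y \<le> G (insert y (R k)) - G (R k)"
      using \<open>submodular G\<close> R_sub unfolding submodular_def E_def by blast
    ultimately show ?thesis unfolding D_def by simp
  qed
  have block: "sum E (Ob i) \<le> sum D (K i)" if i: "i \<in> {1..L}" for i
  proof (rule sum_le_sum_if_card_le_dominated)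
    have "card (Ob i) \<le> card (Ropt \<inter> S i)"
      using fin[OF i] by (intro card_mono) (auto simp: Ob_def)
    also have "\<dots> = card (K i)"
      using Ropt_card[OF i] jgs_run_block_card[OF run disj i]
        distinct_card_indices[OF jgs_run_distinct[OF run]] by (simp add: K_def)
    finally show "card (Ob i) \<le> card (K i)" .
  qed (use E_le_D[OF i] D_nonneg in \<open>auto simp: K_def\<close>)
  have fin_Ropt: "finite Ropt"
    using Ropt_sub fin by (meson finite_UN_I finite_atLeastAtMost finite_subset)
  have "G Ropt \<le> G (set xs \<union> (Ropt - set xs))"
    using \<open>mono G\<close> by (simp add: monoD)
  also have "\<dots> \<le> G (set xs) + sum E (Ropt - set xs)"
    unfolding E_def using \<open>submodular G\<close> fin_Ropt by (intro submodular_le_sum_marginals) auto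
  also have "sum E (Ropt - set xs) = (\<Sum>i\<in>{1..L}. sum E (Ob i))"
    unfolding Ob_def using fin_Ropt Ropt_sub disj by (intro sum_by_blocks[where p = "\<lambda>y. y"]) auto
  also have "\<dots> \<le> (\<Sum>i\<in>{1..L}. sum D (K i))"
    by (rule sum_mono) (rule block)
  also have "\<dots> = sum D {..<length xs}"
    unfolding K_def using disj jgs_run_subset_blocks[OF run]
    by (intro sum_by_blocks[where p = "nth xs", symmetric]) auto
  also have "\<dots> = G (set xs)"
    using sum_marginals_take[of G xs] \<open>G {} = 0\<close> by (simp add: D_def R_def)
  finally show ?thesis by simp
qed

theorem theorem3:
  fixes g :: "nat \<Rightarrow> complex^'k" and w :: "nat \<Rightarrow> real"
    and n L :: nat and S :: "nat \<Rightarrow> nat set" and r :: "nat \<Rightarrow> nat"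
    and xs :: "nat list" and Topt :: "nat set"
  assumes g_nz: "\<And>i. i < n \<Longrightarrow> g i \<noteq> 0"
    and w_nn: "\<And>i. i < n \<Longrightarrow> w i \<ge> 0"
    and S_nonempty: "\<And>i. i \<in> {1..L} \<Longrightarrow> S i \<noteq> {}"
    and S_disj: "\<And>i j. i \<in> {1..L} \<Longrightarrow> j \<in> {1..L} \<Longrightarrow> i \<noteq> j \<Longrightarrow> S i \<inter> S j = {}"
    and S_cover: "(\<Union>i\<in>{1..L}. S i) = {0..<n}"
    and r_le: "\<And>i. i \<in> {1..L} \<Longrightarrow> r i \<le> card (S i)"
    and r_nz: "\<exists>i\<in>{1..L}. r i \<noteq> 0"
    and run: "jgs_run (WFC g w {0..<n}) S L r xs"
    and Topt_sub: "Topt \<subseteq> {0..<n}"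
    and Topt_card: "\<And>i. i \<in> {1..L} \<Longrightarrow> card (Topt \<inter> S i) = card (S i) - r i"
    and Topt_min: "\<And>T. T \<subseteq> {0..<n} \<Longrightarrow>
                     (\<forall>i\<in>{1..L}. card (T \<inter> S i) = card (S i) - r i) \<Longrightarrow>
                     WFP g w Topt \<le> WFP g w T"
    and Topt_pos: "WFP g w Topt > 0"
  shows "WFP g w ({0..<n} - set xs)
           \<le> 1/2 * (1 + WFP g w {0..<n} / WFP g w Topt) * WFP g w Topt"
proof -
  let ?N = "{0..<n}"
  have w: "\<And>i. i \<in> ?N \<Longrightarrow> 0 \<le> w i" using w_nn by simp
  have disj: "disjoint_family_on S {1..L}"
    using S_disj by (auto simp: disjoint_family_on_def)
  have fin: "finite (S i)" if "i \<in> {1..L}" for i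
    using S_cover that by (metis UN_upper finite_atLeastLessThan finite_subset)
  have Ropt_card: "card ((?N - Topt) \<inter> S i) = r i" if i: "i \<in> {1..L}" for i
  proof -
    have "(?N - Topt) \<inter> S i = S i - Topt \<inter> S i" using S_cover i by blast
    then show ?thesis
      using fin[OF i] Topt_card[OF i] r_le[OF i] by (simp add: card_Diff_subset)
  qed
  have "WFC g w ?N (?N - Topt) \<le> 2 * WFC g w ?N (set xs)"
    by (rule jgs_run_half_approximation[OF mono_WFC submodular_WFC WFC_empty run disj fin])
      (use w Ropt_card S_cover in auto)
  moreover have "?N - (?N - Topt) = Topt" using Topt_sub by auto
  ultimately have "WFP g w ?N - WFP g w Topt \<le> 2 * (WFP g w ?N - WFP g w (?N - set xs))"
    unfolding WFC_def by simp
  moreover have "1/2 * (1 + WFP g w ?N / WFP g w Topt) * WFP g w Topt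
      = (WFP g w Topt + WFP g w ?N) / 2"
    using Topt_pos by (simp add: field_simps)
  ultimately show ?thesis by simp
qed

end
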